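(* Let $I$ be a BPPS instance with $d$ scenarios in which every item has size $s_i\ge\varepsilon^2$, and let $\mathcal{P}^0=\{\{i\}: i\in\bigcup_{t\in\mathcal{T}}G_t^0\}$ be the packing placing each item of the groups $G_t^0$ in its own bin. Then $\mathrm{val}_{BPPS}(\mathcal{P}^0)\le\varepsilon\,\mathrm{OPT}(I)+2^d$.
   Context: A BPPS instance has $d$ scenarios, items $\mathcal{I}$, each item $i$ with size $s_i$ and type $\mathcal{K}_i\subseteq\{1,\dots,d\}$, and bins of capacity $1$; $S_k=\{i:k\in\mathcal{K}_i\}$. A packing is a partition $\mathcal{P}$ of (a set of) items with $\sum_{i\in B\cap S_k}s_i\le1$ for all $B\in\mathcal{P}$ and all $k$; its value is $\mathrm{val}_{BPPS}(\mathcal{P})=\max_k|\{B\in\mathcal{P}:B\cap S_k\ne\emptyset\}|$; $\mathrm{OPT}(I)$ is the minimum value of a packing of all items. $\mathcal{T}$ is the set of all types (all subsets of $\{1,\dots,d\}$). Here $\varepsilon\in(0,1/4]$ with $1/\varepsilon$ an integer, and $m=2^d/\varepsilon^3-1$. For each type $t$, $\mathcal{I}_t$ (items of type $t$) is sorted in nonincreasing order of size and partitioned into $m+1$ groups of consecutive items $G_t^0,\dots,G_t^m$, where each of the first $m$ groups has $\lceil|\mathcal{I}_t|/(m+1)\rceil$ items and the last has at most that many; so $G_t^0$ consists of the $\lceil|\mathcal{I}_t|/(m+1)\rceil$ largest items of type $t$. *)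

theory Defs
  imports Main "HOL-Library.Discrete_Functions"
begin

definition bpps_instance :: "nat \<Rightarrow> 'a set \<Rightarrow> ('a \<Rightarrow> real) \<Rightarrow> ('a \<Rightarrow> nat set) \<Rightarrow> bool" where
  "bpps_instance d I s K \<longleftrightarrow> finite I \<and> (\<forall>i\<in>I. 0 < s i \<and> s i \<le> 1 \<and> K i \<subseteq> {1..d})"

definition scen_items :: "'a set \<Rightarrow> ('a \<Rightarrow> nat set) \<Rightarrow> nat \<Rightarrow> 'a set" where
  "scen_items I K k = {i\<in>I. k \<in> K i}"

definition is_packing :: "nat \<Rightarrow> 'a set \<Rightarrow> ('a \<Rightarrow> real) \<Rightarrow> ('a \<Rightarrow> nat set) \<Rightarrow> 'a set \<Rightarrow> 'a set set \<Rightarrow> bool" where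
  "is_packing d I s K X P \<longleftrightarrow>
     (\<forall>B\<in>P. B \<noteq> {}) \<and> (\<forall>B\<in>P. \<forall>B'\<in>P. B \<noteq> B' \<longrightarrow> B \<inter> B' = {}) \<and> \<Union>P = X \<and>
     (\<forall>B\<in>P. \<forall>k\<in>{1..d}. sum s (B \<inter> scen_items I K k) \<le> 1)"

definition val_bpps :: "nat \<Rightarrow> 'a set \<Rightarrow> ('a \<Rightarrow> nat set) \<Rightarrow> 'a set set \<Rightarrow> nat" where
  "val_bpps d I K P = Max (insert 0 ((\<lambda>k. card {B\<in>P. B \<inter> scen_items I K k \<noteq> {}}) ` {1..d}))"

definition OPT_bpps :: "nat \<Rightarrow> 'a set \<Rightarrow> ('a \<Rightarrow> real) \<Rightarrow> ('a \<Rightarrow> nat set) \<Rightarrow> nat" where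
  "OPT_bpps d I s K = (LEAST v. \<exists>P. is_packing d I s K I P \<and> val_bpps d I K P = v)"

definition items_of_type :: "'a set \<Rightarrow> ('a \<Rightarrow> nat set) \<Rightarrow> nat set \<Rightarrow> 'a set" where
  "items_of_type I K t = {i\<in>I. K i = t}"

end

theory Submission
  imports Defs
begin

text \<open>Every item has size at least \<open>\<epsilon>\<^sup>2\<close> and every bin carries load at most 1 in scenario \<open>k\<close>,
  so \<open>\<epsilon>\<^sup>2 |S\<^sub>k| \<le> OPT\<close>. The group \<open>G\<^sub>t\<^sup>0\<close> has \<open>\<lceil>\<epsilon>\<^sup>3 |I\<^sub>t| / 2\<^sup>d\<rceil> \<le> \<epsilon>\<^sup>3 |I\<^sub>t| / 2\<^sup>d + 1\<close> items; summing over
  the at most \<open>2\<^sup>d\<close> types containing \<open>k\<close>, the singleton bins of \<open>P\<^sup>0\<close> meeting \<open>S\<^sub>k\<close> number at most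
  \<open>\<epsilon>\<^sup>3 |S\<^sub>k| / 2\<^sup>d + 2\<^sup>d \<le> \<epsilon> OPT + 2\<^sup>d\<close>.\<close>

lemma is_packing_singletons:
  assumes "bpps_instance d I s K" and "X \<subseteq> I"
  shows "is_packing d I s K X ((\<lambda>i. {i}) ` X)"
  unfolding is_packing_def
proof (intro conjI ballI)
  fix B k assume "B \<in> (\<lambda>i. {i}) ` X"
  then obtain i where i: "i \<in> X" "B = {i}" by blast
  then have "B \<inter> scen_items I K k \<subseteq> {i}" by blast
  then consider "B \<inter> scen_items I K k = {}" | "B \<inter> scen_items I K k = {i}" by blast
  then show "sum s (B \<inter> scen_items I K k) \<le> 1"
    by cases (use assms i in \<open>auto simp: bpps_instance_def\<close>)
qed auto

lemma OPT_bpps_attained: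
  assumes "bpps_instance d I s K"
  obtains P where "is_packing d I s K I P" and "val_bpps d I K P = OPT_bpps d I s K"
proof -
  have "\<exists>P. is_packing d I s K I P \<and> val_bpps d I K P = OPT_bpps d I s K"
    unfolding OPT_bpps_def
    by (rule LeastI_ex) (use is_packing_singletons[OF assms subset_refl] in blast)
  then show thesis using that by blast
qed

lemma card_bins_meeting_le_val_bpps:
  assumes "k \<in> {1..d}"
  shows "card {B\<in>P. B \<inter> scen_items I K k \<noteq> {}} \<le> val_bpps d I K P"
  unfolding val_bpps_def using assms by (intro Max_ge) auto

lemma val_bpps_le:
  assumes "0 \<le> c" and "\<And>k. k \<in> {1..d} \<Longrightarrow> real (card {B\<in>P. B \<inter> scen_items I K k \<noteq> {}}) \<le> c"
  shows "real (val_bpps d I K P) \<le> c"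
proof -
  have "val_bpps d I K P \<in> insert 0 ((\<lambda>k. card {B\<in>P. B \<inter> scen_items I K k \<noteq> {}}) ` {1..d})"
    unfolding val_bpps_def by (rule Max_in) auto
  then show ?thesis using assms by auto
qed

lemma card_singleton_bins_meeting:
  "card {B \<in> (\<lambda>i. {i}) ` X. B \<inter> S \<noteq> {}} = card (X \<inter> S)"
proof -
  have "{B \<in> (\<lambda>i. {i}) ` X. B \<inter> S \<noteq> {}} = (\<lambda>i. {i}) ` (X \<inter> S)"
    by blast
  then show ?thesis by (simp add: card_image)
qed

lemma scen_load_le_card_bins_meeting:
  assumes inst: "bpps_instance d I s K" and P: "is_packing d I s K I P" and k: "k \<in> {1..d}"
  shows "sum s (scen_items I K k) \<le> real (card {B\<in>P. B \<inter> scen_items I K k \<noteq> {}})"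
proof -
  let ?S = "scen_items I K k"
  let ?P' = "{B\<in>P. B \<inter> ?S \<noteq> {}}"
  have fI: "finite I" using inst by (simp add: bpps_instance_def)
  have UP: "\<Union>P = I" using P by (simp add: is_packing_def)
  then have fP': "finite ?P'" using fI by (simp add: finite_UnionD)
  have "?S = (\<Union>B\<in>?P'. B \<inter> ?S)"
    using UP by (auto simp: scen_items_def)
  then have "sum s ?S = sum s (\<Union>B\<in>?P'. B \<inter> ?S)"
    by (rule arg_cong)
  also have "\<dots> = (\<Sum>B\<in>?P'. sum s (B \<inter> ?S))"
    using fP' fI UP P
    by (intro sum.UNION_disjoint) (auto simp: is_packing_def intro: finite_subset)
  also have "\<dots> \<le> (\<Sum>B\<in>?P'. 1)"
    using P k by (intro sum_mono) (auto simp: is_packing_def)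
  finally show ?thesis by simp
qed

lemma scen_load_le_OPT_bpps:
  assumes inst: "bpps_instance d I s K" and k: "k \<in> {1..d}"
  shows "sum s (scen_items I K k) \<le> real (OPT_bpps d I s K)"
proof -
  obtain P where P: "is_packing d I s K I P" "val_bpps d I K P = OPT_bpps d I s K"
    using OPT_bpps_attained[OF inst] .
  have "sum s (scen_items I K k) \<le> real (card {B\<in>P. B \<inter> scen_items I K k \<noteq> {}})"
    using scen_load_le_card_bins_meeting[OF inst P(1) k] .
  also have "\<dots> \<le> real (OPT_bpps d I s K)"
    using card_bins_meeting_le_val_bpps[OF k, of P I K] P(2) by simp
  finally show ?thesis .
qed

lemma card_scen_items_le_OPT_bpps:
  assumes inst: "bpps_instance d I s K" and k: "k \<in> {1..d}" and size_ge: "\<forall>i\<in>I. s i \<ge> a"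
  shows "a * real (card (scen_items I K k)) \<le> real (OPT_bpps d I s K)"
proof -
  have "a * real (card (scen_items I K k)) = (\<Sum>i\<in>scen_items I K k. a)"
    by (simp add: mult.commute)
  also have "\<dots> \<le> sum s (scen_items I K k)"
    using size_ge by (intro sum_mono) (auto simp: scen_items_def)
  also have "\<dots> \<le> real (OPT_bpps d I s K)"
    using scen_load_le_OPT_bpps[OF inst k] .
  finally show ?thesis .
qed

lemma scen_items_eq_UN_items_of_type:
  assumes "bpps_instance d I s K"
  shows "scen_items I K k = (\<Union>t\<in>{t\<in>Pow {1..d}. k \<in> t}. items_of_type I K t)"
  using assms by (auto simp: items_of_type_def scen_items_def bpps_instance_def)

lemma card_scen_items_eq_sum_card_items_of_type:
  assumes inst: "bpps_instance d I s K"
  shows "card (scen_items I K k) = (\<Sum>t\<in>{t\<in>Pow {1..d}. k \<in> t}. card (items_of_type I K t))"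
  unfolding scen_items_eq_UN_items_of_type[OF inst]
  using inst by (intro card_UN_disjoint) (auto simp: items_of_type_def bpps_instance_def)

lemma card_groups_meeting_scenario_le:
  assumes inst: "bpps_instance d I s K"
    and G_sub: "\<And>t. t \<subseteq> {1..d} \<Longrightarrow> G t \<subseteq> items_of_type I K t"
    and G_card: "\<And>t. t \<subseteq> {1..d} \<Longrightarrow> real (card (G t)) \<le> c * real (card (items_of_type I K t)) + 1"
  shows "real (card ((\<Union>t\<in>Pow {1..d}. G t) \<inter> scen_items I K k))
           \<le> c * real (card (scen_items I K k)) + 2 ^ d"
proof -
  let ?T = "{t\<in>Pow {1..d}. k \<in> t}"
  have "card ?T \<le> card (Pow {1..d})"
    by (rule card_mono) auto
  then have card_T: "real (card ?T) \<le> 2 ^ d"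
    by (simp add: card_Pow)
  have "(\<Union>t\<in>Pow {1..d}. G t) \<inter> scen_items I K k = (\<Union>t\<in>?T. G t)"
    using G_sub unfolding items_of_type_def scen_items_def by blast
  then have "card ((\<Union>t\<in>Pow {1..d}. G t) \<inter> scen_items I K k) \<le> (\<Sum>t\<in>?T. card (G t))"
    by (simp add: card_UN_le)
  then have "real (card ((\<Union>t\<in>Pow {1..d}. G t) \<inter> scen_items I K k)) \<le> (\<Sum>t\<in>?T. real (card (G t)))"
    by (metis of_nat_le_iff of_nat_sum)
  also have "\<dots> \<le> (\<Sum>t\<in>?T. c * real (card (items_of_type I K t)) + 1)"
    using G_card by (intro sum_mono) auto
  also have "\<dots> = c * real (card (scen_items I K k)) + real (card ?T)"
    by (simp add: sum.distrib sum_distrib_left card_scen_items_eq_sum_card_items_of_type[OF inst])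
  finally show ?thesis using card_T by linarith
qed

lemma real_nat_ceiling_le_add_one:
  assumes "0 \<le> x"
  shows "real (nat \<lceil>x\<rceil>) \<le> x + 1"
  using assms of_int_ceiling_le_add_one[of x] by simp

theorem lemma5:
  fixes d :: nat and I :: "'a set" and s :: "'a \<Rightarrow> real" and K :: "'a \<Rightarrow> nat set"
    and q :: nat and \<epsilon> :: real and G0 :: "nat set \<Rightarrow> 'a set"
  assumes inst: "bpps_instance d I s K"
    and eps: "\<epsilon> = 1 / real q" and q4: "q \<ge> 4"
    and large: "\<forall>i\<in>I. s i \<ge> \<epsilon>^2"
    and G0_sub: "\<forall>t. t \<subseteq> {1..d} \<longrightarrow> G0 t \<subseteq> items_of_type I K t"
    and G0_card: "\<forall>t. t \<subseteq> {1..d} \<longrightarrow>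
        card (G0 t) = nat \<lceil>real (card (items_of_type I K t)) / (2 ^ d / \<epsilon> ^ 3)\<rceil>"
    and G0_largest: "\<forall>t. t \<subseteq> {1..d} \<longrightarrow>
        (\<forall>i\<in>G0 t. \<forall>j\<in>items_of_type I K t - G0 t. s j \<le> s i)"
  shows "real (val_bpps d I K ((\<lambda>i. {i}) ` (\<Union>t\<in>Pow {1..d}. G0 t)))
           \<le> \<epsilon> * real (OPT_bpps d I s K) + 2 ^ d"
proof (rule val_bpps_le)
  have \<epsilon>_pos: "\<epsilon> > 0" using eps q4 by simp
  then show "0 \<le> \<epsilon> * real (OPT_bpps d I s K) + 2 ^ d" by simp
  have G0_card_le: "real (card (G0 t)) \<le> \<epsilon>^3 / 2^d * real (card (items_of_type I K t)) + 1"
    if "t \<subseteq> {1..d}" for t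
  proof -
    let ?x = "real (card (items_of_type I K t)) / (2 ^ d / \<epsilon> ^ 3)"
    have "real (card (G0 t)) = real (nat \<lceil>?x\<rceil>)" using G0_card that by simp
    also have "\<dots> \<le> ?x + 1" using \<epsilon>_pos by (intro real_nat_ceiling_le_add_one) simp
    finally show ?thesis by (simp add: mult.commute)
  qed
  fix k assume k: "k \<in> {1..d}"
  let ?S = "scen_items I K k" and ?U = "\<Union>t\<in>Pow {1..d}. G0 t"
  have "real (card {B \<in> (\<lambda>i. {i}) ` ?U. B \<inter> ?S \<noteq> {}}) = real (card (?U \<inter> ?S))"
    by (simp add: card_singleton_bins_meeting)
  also have "real (card (?U \<inter> ?S)) \<le> \<epsilon>^3 / 2^d * real (card ?S) + 2 ^ d"
    using inst G0_sub G0_card_le by (intro card_groups_meeting_scenario_le) simp_all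
  also have "\<epsilon>^3 / 2^d * real (card ?S) \<le> \<epsilon>^3 * real (card ?S)"
    using \<epsilon>_pos by (intro mult_right_mono) (auto simp: field_simps)
  also have "\<dots> = \<epsilon> * (\<epsilon>^2 * real (card ?S))"
    by (simp add: power3_eq_cube power2_eq_square)
  also have "\<dots> \<le> \<epsilon> * real (OPT_bpps d I s K)"
    using card_scen_items_le_OPT_bpps[OF inst k large] \<epsilon>_pos by simp
  finally show "real (card {B \<in> (\<lambda>i. {i}) ` ?U. B \<inter> ?S \<noteq> {}}) \<le> \<epsilon> * real (OPT_bpps d I s K) + 2 ^ d"
    by simp
qed

end
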